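(* Let $\pi$ be a model with observation space $Y$ and parameter space $\Theta$, let $Y'$ be a space and $t:Y\to Y'$ a measurable function, and write $t^{-1}(y')=\{y\in Y: t(y)=y'\}$. Let $\pi'$ be the model with parameter space $\Theta$ and observation space $Y'$ given by $\pi'_{\text{prior}}(\theta)=\pi_{\text{prior}}(\theta)$ and $\pi'_{\text{obs}}(y'\mid\theta)=\int_{t^{-1}(y')}\pi_{\text{obs}}(y\mid\theta)\,\mathrm{d}y$ for all $\theta\in\Theta$, $y'\in Y'$. Let $f'$ be a test quantity for $\pi'$ and $\phi'$ a posterior family for $\pi'$ such that $\phi'$ passes continuous SBC (for model $\pi'$) with respect to $f'$. Define the test quantity $f(\theta,y)=f'(\theta,t(y))$ and the posterior family $\phi(\theta\mid y)=\phi'(\theta\mid t(y))$ on $\Theta$, $Y$. Then $\phi$ passes continuous SBC (for model $\pi$) with respect to $f$.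
   Context: A model on data space $Y$ and parameter space $\Theta$ is given by a prior density $\pi_{\text{prior}}(\theta)$ and observation density $\pi_{\text{obs}}(y\mid\theta)$; $\pi_{\text{marg}}(y)=\int_\Theta\pi_{\text{obs}}(y\mid\theta)\pi_{\text{prior}}(\theta)\,\mathrm{d}\theta$ and $\pi_{\text{post}}(\theta\mid y)=\pi_{\text{obs}}(y\mid\theta)\pi_{\text{prior}}(\theta)/\pi_{\text{marg}}(y)$. A posterior family is $\phi:\Theta\times Y\to\mathbb{R}^+$ with $\int_\Theta\phi(\theta\mid y)\,\mathrm{d}\theta=1$ for all $y$; a test quantity is a measurable $f:\Theta\times Y\to\mathbb{R}$. For a given model: $C_{\phi,f}(s\mid y)=\int_\Theta\mathbb{I}[f(\theta,y)\le s]\phi(\theta\mid y)\,\mathrm{d}\theta$, $D_{\phi,f}(s\mid y)=\int_\Theta\mathbb{I}[f(\theta,y)=s]\phi(\theta\mid y)\,\mathrm{d}\theta$; with $U\sim\mathrm{uniform}[0,1]$, $r_{\phi,f}(x\mid\tilde\theta,y)=\Pr\big(C_{\phi,f}(f(\tilde\theta,y)\mid y)-U\,D_{\phi,f}(f(\tilde\theta,y)\mid y)\le x\big)$, $q_{\phi,f}(x\mid y)=\int_\Theta\pi_{\text{post}}(\tilde\theta\mid y)r_{\phi,f}(x\mid\tilde\theta,y)\,\mathrm{d}\tilde\theta$. $\phi$ passes continuous SBC w.r.t. $f$ if $\int_Yq_{\phi,f}(x\mid y)\pi_{\text{marg}}(y)\,\mathrm{d}y=x$ for all $x\in[0,1]$.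 *)

theory Defs
  imports "HOL-Probability.Probability"
begin

text \<open>Parameter space: measure MT (base measure d theta);
data space: measure MY (base measure dy). Densities are real valued.
obs y theta  stands for  pi_obs(y | theta);  phi theta y  for  phi(theta | y);
f theta y  for  f(theta, y).\<close>

definition is_model ::
  "'t measure \<Rightarrow> 'y measure \<Rightarrow> ('t \<Rightarrow> real) \<Rightarrow> ('y \<Rightarrow> 't \<Rightarrow> real) \<Rightarrow> bool" where
  "is_model MT MY prior obs \<longleftrightarrow>
     prior \<in> borel_measurable MT \<and> (\<forall>\<theta>\<in>space MT. 0 \<le> prior \<theta>) \<and>
     (\<integral>\<theta>. prior \<theta> \<partial>MT) = 1 \<and>
     (\<lambda>(y, \<theta>). obs y \<theta>) \<in> borel_measurable (MY \<Otimes>\<^sub>M MT) \<and>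
     (\<forall>y\<in>space MY. \<forall>\<theta>\<in>space MT. 0 \<le> obs y \<theta>) \<and>
     (\<forall>\<theta>\<in>space MT. (\<integral>y. obs y \<theta> \<partial>MY) = 1)"

definition marg :: "'t measure \<Rightarrow> ('t \<Rightarrow> real) \<Rightarrow> ('y \<Rightarrow> 't \<Rightarrow> real) \<Rightarrow> 'y \<Rightarrow> real" where
  "marg MT prior obs y = (\<integral>\<theta>. obs y \<theta> * prior \<theta> \<partial>MT)"

definition post :: "'t measure \<Rightarrow> ('t \<Rightarrow> real) \<Rightarrow> ('y \<Rightarrow> 't \<Rightarrow> real) \<Rightarrow> 't \<Rightarrow> 'y \<Rightarrow> real" where
  "post MT prior obs \<theta> y = obs y \<theta> * prior \<theta> / marg MT prior obs y"

definition posterior_family :: "'t measure \<Rightarrow> 'y measure \<Rightarrow> ('t \<Rightarrow> 'y \<Rightarrow> real) \<Rightarrow> bool" where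
  "posterior_family MT MY phi \<longleftrightarrow>
     (\<lambda>(\<theta>, y). phi \<theta> y) \<in> borel_measurable (MT \<Otimes>\<^sub>M MY) \<and>
     (\<forall>\<theta>\<in>space MT. \<forall>y\<in>space MY. 0 \<le> phi \<theta> y) \<and>
     (\<forall>y\<in>space MY. (\<integral>\<theta>. phi \<theta> y \<partial>MT) = 1)"

definition test_quantity :: "'t measure \<Rightarrow> 'y measure \<Rightarrow> ('t \<Rightarrow> 'y \<Rightarrow> real) \<Rightarrow> bool" where
  "test_quantity MT MY f \<longleftrightarrow> (\<lambda>(\<theta>, y). f \<theta> y) \<in> borel_measurable (MT \<Otimes>\<^sub>M MY)"

definition Cdf :: "'t measure \<Rightarrow> ('t \<Rightarrow> 'y \<Rightarrow> real) \<Rightarrow> ('t \<Rightarrow> 'y \<Rightarrow> real) \<Rightarrow> real \<Rightarrow> 'y \<Rightarrow> real" where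
  "Cdf MT phi f s y = (\<integral>\<theta>. (if f \<theta> y \<le> s then 1 else 0) * phi \<theta> y \<partial>MT)"

definition Dmass :: "'t measure \<Rightarrow> ('t \<Rightarrow> 'y \<Rightarrow> real) \<Rightarrow> ('t \<Rightarrow> 'y \<Rightarrow> real) \<Rightarrow> real \<Rightarrow> 'y \<Rightarrow> real" where
  "Dmass MT phi f s y = (\<integral>\<theta>. (if f \<theta> y = s then 1 else 0) * phi \<theta> y \<partial>MT)"

text \<open>r(x | theta', y) = Pr(C - U D \<le> x) with U uniform on [0,1], i.e. the Lebesgue
measure of the set of u in [0,1] with C - u D \<le> x.\<close>
definition rank_cdf :: "'t measure \<Rightarrow> ('t \<Rightarrow> 'y \<Rightarrow> real) \<Rightarrow> ('t \<Rightarrow> 'y \<Rightarrow> real) \<Rightarrow> real \<Rightarrow> 't \<Rightarrow> 'y \<Rightarrow> real" where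
  "rank_cdf MT phi f x \<theta>' y =
     measure lborel {u \<in> {0..1::real}.
        Cdf MT phi f (f \<theta>' y) y - u * Dmass MT phi f (f \<theta>' y) y \<le> x}"

definition qfun :: "'t measure \<Rightarrow> ('t \<Rightarrow> real) \<Rightarrow> ('y \<Rightarrow> 't \<Rightarrow> real) \<Rightarrow>
     ('t \<Rightarrow> 'y \<Rightarrow> real) \<Rightarrow> ('t \<Rightarrow> 'y \<Rightarrow> real) \<Rightarrow> real \<Rightarrow> 'y \<Rightarrow> real" where
  "qfun MT prior obs phi f x y = (\<integral>\<theta>'. post MT prior obs \<theta>' y * rank_cdf MT phi f x \<theta>' y \<partial>MT)"

definition passes_SBC :: "'t measure \<Rightarrow> 'y measure \<Rightarrow> ('t \<Rightarrow> real) \<Rightarrow> ('y \<Rightarrow> 't \<Rightarrow> real) \<Rightarrow>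
     ('t \<Rightarrow> 'y \<Rightarrow> real) \<Rightarrow> ('t \<Rightarrow> 'y \<Rightarrow> real) \<Rightarrow> bool" where
  "passes_SBC MT MY prior obs phi f \<longleftrightarrow>
     (\<forall>x\<in>{0..1::real}. (\<integral>y. qfun MT prior obs phi f x y * marg MT prior obs y \<partial>MY) = x)"

end

theory Submission
  imports Defs
begin

text \<open>Multiplying the posterior expectation of a [0,1]-valued function R by the marginal density and
integrating over the data gives, by Tonelli, the expectation of R under the joint density
prior(theta) obs(y | theta). The SBC integral of a model is of this form with R the rank cdf r.
For phi and f factoring through t, r(x | theta, y) depends on y only through t(y), and the
law of t(y) under obs(- | theta) has density obs'(- | theta); hence the SBC integrals of the
two models coincide, and the one for the summarised model is x by hypothesis.\<close>

lemma rank_cdf_nonneg: "0 \<le> rank_cdf MT phi f x \<theta>' y"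
  by (simp add: rank_cdf_def)

lemma rank_cdf_le_1: "rank_cdf MT phi f x \<theta>' y \<le> 1"
proof -
  have "rank_cdf MT phi f x \<theta>' y \<le> measure lborel {0..1::real}"
    unfolding rank_cdf_def
    by (rule measure_mono_fmeasurable) (auto simp: fmeasurable_def)
  then show ?thesis by simp
qed

lemma rank_cdf_measurable:
  assumes "sigma_finite_measure MT" and "test_quantity MT MY f" and "posterior_family MT MY phi"
  shows "(\<lambda>(\<theta>', y). rank_cdf MT phi f x \<theta>' y) \<in> borel_measurable (MT \<Otimes>\<^sub>M MY)"
proof -
  interpret sigma_finite_measure MT by fact
  have [measurable]: "(\<lambda>(\<theta>, y). f \<theta> y) \<in> borel_measurable (MT \<Otimes>\<^sub>M MY)"
    "(\<lambda>(\<theta>, y). phi \<theta> y) \<in> borel_measurable (MT \<Otimes>\<^sub>M MY)"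
    using assms(2,3) by (auto simp: test_quantity_def posterior_family_def)
  define C where "C p = Cdf MT phi f (f (fst p) (snd p)) (snd p)" for p
  define D where "D p = Dmass MT phi f (f (fst p) (snd p)) (snd p)" for p
  have [measurable]: "C \<in> borel_measurable (MT \<Otimes>\<^sub>M MY)" "D \<in> borel_measurable (MT \<Otimes>\<^sub>M MY)"
    unfolding C_def D_def Cdf_def Dmass_def by measurable
  define Q where "Q = {q \<in> space ((MT \<Otimes>\<^sub>M MY) \<Otimes>\<^sub>M lborel).
    snd q \<in> {0..1::real} \<and> C (fst q) - snd q * D (fst q) \<le> x}"
  have "Q \<in> sets ((MT \<Otimes>\<^sub>M MY) \<Otimes>\<^sub>M lborel)"
    unfolding Q_def by measurable
  then have "(\<lambda>p. measure lborel (Pair p -` Q)) \<in> borel_measurable (MT \<Otimes>\<^sub>M MY)"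
    unfolding measure_def using lborel.measurable_emeasure_Pair by measurable
  moreover have "measure lborel (Pair p -` Q) = (\<lambda>(\<theta>', y). rank_cdf MT phi f x \<theta>' y) p"
    if "p \<in> space (MT \<Otimes>\<^sub>M MY)" for p
    using that by (cases p) (simp add: Q_def rank_cdf_def C_def D_def space_pair_measure)
  ultimately show ?thesis
    by (rule measurable_cong[THEN iffD1, rotated])
qed

lemma rank_cdf_comp:
  "rank_cdf MT (\<lambda>\<theta> y. phi \<theta> (t y)) (\<lambda>\<theta> y. f \<theta> (t y)) x \<theta>' y = rank_cdf MT phi f x \<theta>' (t y)"
  by (simp add: rank_cdf_def Cdf_def Dmass_def)

lemma nn_integral_eq_1_if_integral_eq_1:
  fixes g :: "'a \<Rightarrow> real"
  assumes "g \<in> borel_measurable M" and "\<And>x. x \<in> space M \<Longrightarrow> 0 \<le> g x" and "(\<integral>x. g x \<partial>M) = 1"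
  shows "(\<integral>\<^sup>+x. ennreal (g x) \<partial>M) = 1"
proof -
  have "integrable M g"
    using assms(3) not_integrable_integral_eq by fastforce
  then show ?thesis
    using assms by (subst nn_integral_eq_integral) auto
qed

lemma nn_integral_joint_Fubini:
  assumes "sigma_finite_measure MT" and "sigma_finite_measure MY"
    and model: "is_model MT MY prior obs"
    and [measurable]: "(\<lambda>(\<theta>, y). R \<theta> y) \<in> borel_measurable (MT \<Otimes>\<^sub>M MY)"
  shows "(\<integral>\<^sup>+y. (\<integral>\<^sup>+\<theta>. ennreal (obs y \<theta> * prior \<theta> * R \<theta> y) \<partial>MT) \<partial>MY)
       = (\<integral>\<^sup>+\<theta>. ennreal (prior \<theta>) * (\<integral>\<^sup>+y. ennreal (obs y \<theta> * R \<theta> y) \<partial>MY) \<partial>MT)"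
proof -
  interpret pair_sigma_finite MY MT
    using assms(1,2) by (simp add: pair_sigma_finite_def)
  have [measurable]: "prior \<in> borel_measurable MT"
    "(\<lambda>(y, \<theta>). obs y \<theta>) \<in> borel_measurable (MY \<Otimes>\<^sub>M MT)"
    and prior_nonneg: "\<And>\<theta>. \<theta> \<in> space MT \<Longrightarrow> 0 \<le> prior \<theta>"
    using model by (auto simp: is_model_def)
  have "(\<integral>\<^sup>+y. (\<integral>\<^sup>+\<theta>. ennreal (obs y \<theta> * prior \<theta> * R \<theta> y) \<partial>MT) \<partial>MY)
      = (\<integral>\<^sup>+\<theta>. (\<integral>\<^sup>+y. ennreal (prior \<theta>) * ennreal (obs y \<theta> * R \<theta> y) \<partial>MY) \<partial>MT)"
    by (subst Fubini') (auto intro!: nn_integral_cong simp: prior_nonneg ennreal_mult' mult_ac)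
  also have "\<dots> = (\<integral>\<^sup>+\<theta>. ennreal (prior \<theta>) * (\<integral>\<^sup>+y. ennreal (obs y \<theta> * R \<theta> y) \<partial>MY) \<partial>MT)"
    by (intro nn_integral_cong nn_integral_cmult) measurable
  finally show ?thesis .
qed

lemma nn_integral_marg_eq_1:
  assumes "sigma_finite_measure MT" and "sigma_finite_measure MY"
    and model: "is_model MT MY prior obs"
  shows "(\<integral>\<^sup>+y. (\<integral>\<^sup>+\<theta>. ennreal (obs y \<theta> * prior \<theta>) \<partial>MT) \<partial>MY) = 1"
proof -
  have [measurable]: "prior \<in> borel_measurable MT"
    "(\<lambda>(y, \<theta>). obs y \<theta>) \<in> borel_measurable (MY \<Otimes>\<^sub>M MT)"
    using model by (auto simp: is_model_def)
  have "(\<integral>\<^sup>+y. (\<integral>\<^sup>+\<theta>. ennreal (obs y \<theta> * prior \<theta>) \<partial>MT) \<partial>MY)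
      = (\<integral>\<^sup>+\<theta>. ennreal (prior \<theta>) * (\<integral>\<^sup>+y. ennreal (obs y \<theta>) \<partial>MY) \<partial>MT)"
    using nn_integral_joint_Fubini[OF assms, where R = "\<lambda>_ _. 1"] by simp
  also have "\<dots> = (\<integral>\<^sup>+\<theta>. ennreal (prior \<theta>) \<partial>MT)"
    using model by (intro nn_integral_cong) (simp add: is_model_def nn_integral_eq_1_if_integral_eq_1)
  also have "\<dots> = 1"
    using model by (simp add: is_model_def nn_integral_eq_1_if_integral_eq_1)
  finally show ?thesis .
qed

lemma AE_integrable_obs_prior:
  assumes "sigma_finite_measure MT" and "sigma_finite_measure MY"
    and model: "is_model MT MY prior obs"
  shows "AE y in MY. integrable MT (\<lambda>\<theta>. obs y \<theta> * prior \<theta>)"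
proof -
  have [measurable]: "prior \<in> borel_measurable MT"
    "(\<lambda>(y, \<theta>). obs y \<theta>) \<in> borel_measurable (MY \<Otimes>\<^sub>M MT)"
    and nonneg: "\<And>y \<theta>. y \<in> space MY \<Longrightarrow> \<theta> \<in> space MT \<Longrightarrow> 0 \<le> obs y \<theta> * prior \<theta>"
    using model by (auto simp: is_model_def)
  interpret sigma_finite_measure MT by fact
  have "AE y in MY. (\<integral>\<^sup>+\<theta>. ennreal (obs y \<theta> * prior \<theta>) \<partial>MT) \<noteq> \<infinity>"
    using nn_integral_marg_eq_1[OF assms] by (intro nn_integral_PInf_AE) auto
  then show ?thesis
  proof (rule AE_mp, intro AE_I2 impI)
    fix y assume "y \<in> space MY" and "(\<integral>\<^sup>+\<theta>. ennreal (obs y \<theta> * prior \<theta>) \<partial>MT) \<noteq> \<infinity>"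
    then show "integrable MT (\<lambda>\<theta>. obs y \<theta> * prior \<theta>)"
      using nonneg by (intro integrableI_nn_integral_finite
        [where x = "enn2real (\<integral>\<^sup>+\<theta>. ennreal (obs y \<theta> * prior \<theta>) \<partial>MT)"])
        (auto simp: less_top)
  qed
qed

lemma post_integral_mult_marg:
  assumes model: "is_model MT MY prior obs" and y: "y \<in> space MY"
    and int: "integrable MT (\<lambda>\<theta>. obs y \<theta> * prior \<theta>)"
    and [measurable]: "R \<in> borel_measurable MT"
    and R_bounds: "\<And>\<theta>. 0 \<le> R \<theta>" "\<And>\<theta>. R \<theta> \<le> 1"
  shows "(\<integral>\<theta>. post MT prior obs \<theta> y * R \<theta> \<partial>MT) * marg MT prior obs y
       = (\<integral>\<theta>. obs y \<theta> * prior \<theta> * R \<theta> \<partial>MT)"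
proof (cases "marg MT prior obs y = 0")
  case True
  \<comment> \<open>Then post is the junk value obs * prior / 0 = 0, and the right-hand side vanishes because
    0 \<le> R \<le> 1 squeezes it between 0 and marg y.\<close>
  have nonneg: "\<And>\<theta>. \<theta> \<in> space MT \<Longrightarrow> 0 \<le> obs y \<theta> * prior \<theta>"
    using model y by (auto simp: is_model_def)
  have [measurable]: "prior \<in> borel_measurable MT"
    "(\<lambda>(y, \<theta>). obs y \<theta>) \<in> borel_measurable (MY \<Otimes>\<^sub>M MT)"
    using model by (auto simp: is_model_def)
  have "integrable MT (\<lambda>\<theta>. obs y \<theta> * prior \<theta> * R \<theta>)"
  proof (rule Bochner_Integration.integrable_bound[OF int])
    show "AE \<theta> in MT. norm (obs y \<theta> * prior \<theta> * R \<theta>) \<le> norm (obs y \<theta> * prior \<theta>)"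
      using R_bounds nonneg by (auto simp: abs_mult intro!: AE_I2 mult_left_le)
  qed (use y in measurable)
  then have "(\<integral>\<theta>. obs y \<theta> * prior \<theta> * R \<theta> \<partial>MT) \<le> marg MT prior obs y"
    unfolding marg_def using int nonneg R_bounds
    by (intro integral_mono) (auto intro: mult_left_le)
  moreover have "0 \<le> (\<integral>\<theta>. obs y \<theta> * prior \<theta> * R \<theta> \<partial>MT)"
    using nonneg R_bounds by (intro integral_nonneg_AE AE_I2) auto
  ultimately show ?thesis
    using True by simp
next
  case False
  have "(\<integral>\<theta>. post MT prior obs \<theta> y * R \<theta> \<partial>MT)
      = (\<integral>\<theta>. obs y \<theta> * prior \<theta> * R \<theta> / marg MT prior obs y \<partial>MT)"
    by (simp add: post_def)
  also have "\<dots> = (\<integral>\<theta>. obs y \<theta> * prior \<theta> * R \<theta> \<partial>MT) / marg MT prior obs y"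
    by (rule integral_divide_zero)
  finally show ?thesis
    using False by simp
qed

lemma integral_post_mult_marg_eq_joint:
  assumes "sigma_finite_measure MT" and "sigma_finite_measure MY"
    and model: "is_model MT MY prior obs"
    and [measurable]: "(\<lambda>(\<theta>, y). R \<theta> y) \<in> borel_measurable (MT \<Otimes>\<^sub>M MY)"
    and R_bounds: "\<And>\<theta> y. 0 \<le> R \<theta> y" "\<And>\<theta> y. R \<theta> y \<le> 1"
  shows "(\<integral>y. (\<integral>\<theta>. post MT prior obs \<theta> y * R \<theta> y \<partial>MT) * marg MT prior obs y \<partial>MY)
       = enn2real (\<integral>\<^sup>+\<theta>. ennreal (prior \<theta>) * (\<integral>\<^sup>+y. ennreal (obs y \<theta> * R \<theta> y) \<partial>MY) \<partial>MT)"
proof -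
  interpret sigma_finite_measure MT by fact
  have [measurable]: "prior \<in> borel_measurable MT"
    "(\<lambda>(y, \<theta>). obs y \<theta>) \<in> borel_measurable (MY \<Otimes>\<^sub>M MT)"
    and nonneg: "\<And>y \<theta>. y \<in> space MY \<Longrightarrow> \<theta> \<in> space MT \<Longrightarrow> 0 \<le> obs y \<theta> * prior \<theta> * R \<theta> y"
    using model R_bounds by (auto simp: is_model_def)
  define J where "J y = (\<integral>\<theta>. obs y \<theta> * prior \<theta> * R \<theta> y \<partial>MT)" for y
  have J_nonneg: "0 \<le> J y" if "y \<in> space MY" for y
    unfolding J_def using that nonneg by (intro integral_nonneg_AE AE_I2) auto
  have AE_J: "AE y in MY. (\<integral>\<theta>. post MT prior obs \<theta> y * R \<theta> y \<partial>MT) * marg MT prior obs y = J y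
      \<and> ennreal (J y) = (\<integral>\<^sup>+\<theta>. ennreal (obs y \<theta> * prior \<theta> * R \<theta> y) \<partial>MT)"
    using AE_integrable_obs_prior[OF assms(1-3)] AE_space
  proof eventually_elim
    case (elim y)
    then have "integrable MT (\<lambda>\<theta>. obs y \<theta> * prior \<theta> * R \<theta> y)"
      using R_bounds by (intro Bochner_Integration.integrable_bound[OF elim(1)] AE_I2)
        (auto simp: abs_mult intro!: mult_left_le)
    with elim show ?case
      unfolding J_def using model R_bounds nonneg
      by (auto intro: post_integral_mult_marg nn_integral_eq_integral[symmetric])
  qed
  have "(\<integral>y. (\<integral>\<theta>. post MT prior obs \<theta> y * R \<theta> y \<partial>MT) * marg MT prior obs y \<partial>MY)
      = (\<integral>y. J y \<partial>MY)"
    using AE_J unfolding J_def post_def marg_def by (intro integral_cong_AE) auto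
  also have "\<dots> = enn2real (\<integral>\<^sup>+y. ennreal (J y) \<partial>MY)"
    unfolding J_def using J_nonneg by (intro integral_eq_nn_integral AE_I2) (auto simp: J_def)
  also have "(\<integral>\<^sup>+y. ennreal (J y) \<partial>MY)
      = (\<integral>\<^sup>+y. (\<integral>\<^sup>+\<theta>. ennreal (obs y \<theta> * prior \<theta> * R \<theta> y) \<partial>MT) \<partial>MY)"
    using AE_J by (intro nn_integral_cong_AE) auto
  also have "\<dots> = (\<integral>\<^sup>+\<theta>. ennreal (prior \<theta>) * (\<integral>\<^sup>+y. ennreal (obs y \<theta> * R \<theta> y) \<partial>MY) \<partial>MT)"
    by (rule nn_integral_joint_Fubini[OF assms(1-4)])
  finally show ?thesis .
qed

lemma nn_integral_mult_density_distr:
  assumes [measurable]: "t \<in> measurable M N" "p \<in> borel_measurable M" "p' \<in> borel_measurable N"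
    "g \<in> borel_measurable N"
    and p_nonneg: "\<And>x. x \<in> space M \<Longrightarrow> 0 \<le> p x" and p'_nonneg: "\<And>z. z \<in> space N \<Longrightarrow> 0 \<le> p' z"
    and distr_eq: "density N (\<lambda>z. ennreal (p' z)) = distr (density M (\<lambda>x. ennreal (p x))) N t"
  shows "(\<integral>\<^sup>+x. ennreal (p x * g (t x)) \<partial>M) = (\<integral>\<^sup>+z. ennreal (p' z * g z) \<partial>N)"
proof -
  have "(\<integral>\<^sup>+z. ennreal (p' z * g z) \<partial>N) = (\<integral>\<^sup>+z. ennreal (g z) \<partial>density N (\<lambda>z. ennreal (p' z)))"
    using p'_nonneg by (simp add: nn_integral_density ennreal_mult' cong: nn_integral_cong)
  also have "\<dots> = (\<integral>\<^sup>+x. ennreal (g (t x)) \<partial>density M (\<lambda>x. ennreal (p x)))"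
    unfolding distr_eq by (simp add: nn_integral_distr)
  also have "\<dots> = (\<integral>\<^sup>+x. ennreal (p x * g (t x)) \<partial>M)"
    using p_nonneg by (simp add: nn_integral_density ennreal_mult' cong: nn_integral_cong)
  finally show ?thesis ..
qed

theorem theorem7:
  fixes MT :: "'t measure" and MY :: "'y measure" and MY' :: "'z measure"
    and prior :: "'t \<Rightarrow> real" and obs :: "'y \<Rightarrow> 't \<Rightarrow> real"
    and obs' :: "'z \<Rightarrow> 't \<Rightarrow> real" and t :: "'y \<Rightarrow> 'z"
    and f' :: "'t \<Rightarrow> 'z \<Rightarrow> real" and phi' :: "'t \<Rightarrow> 'z \<Rightarrow> real"
  assumes "sigma_finite_measure MT" and "sigma_finite_measure MY" and "sigma_finite_measure MY'"
    and "is_model MT MY prior obs"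
    and "t \<in> measurable MY MY'"
    and "is_model MT MY' prior obs'"
    and "\<forall>\<theta>\<in>space MT. density MY' (\<lambda>y'. ennreal (obs' y' \<theta>))
                        = distr (density MY (\<lambda>y. ennreal (obs y \<theta>))) MY' t"
    and "test_quantity MT MY' f'"
    and "posterior_family MT MY' phi'"
    and "passes_SBC MT MY' prior obs' phi' f'"
  shows "passes_SBC MT MY prior obs (\<lambda>\<theta> y. phi' \<theta> (t y)) (\<lambda>\<theta> y. f' \<theta> (t y))"
  unfolding passes_SBC_def
proof
  fix x :: real assume "x \<in> {0..1}"
  define R where "R = rank_cdf MT phi' f' x"
  have [measurable]: "t \<in> measurable MY MY'"
    "(\<lambda>(\<theta>, z). R \<theta> z) \<in> borel_measurable (MT \<Otimes>\<^sub>M MY')"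
    "(\<lambda>(y, \<theta>). obs y \<theta>) \<in> borel_measurable (MY \<Otimes>\<^sub>M MT)"
    "(\<lambda>(z, \<theta>). obs' z \<theta>) \<in> borel_measurable (MY' \<Otimes>\<^sub>M MT)"
    using assms(4-6) rank_cdf_measurable[OF assms(1,8,9)] by (auto simp: R_def is_model_def)
  have R_bounds: "\<And>\<theta> z. 0 \<le> R \<theta> z" "\<And>\<theta> z. R \<theta> z \<le> 1"
    unfolding R_def by (rule rank_cdf_nonneg rank_cdf_le_1)+
  have push_forward:
    "(\<integral>\<^sup>+y. ennreal (obs y \<theta> * R \<theta> (t y)) \<partial>MY) = (\<integral>\<^sup>+z. ennreal (obs' z \<theta> * R \<theta> z) \<partial>MY')"
    if "\<theta> \<in> space MT" for \<theta>
    using that assms(4,6,7) by (intro nn_integral_mult_density_distr) (auto simp: is_model_def)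
  have "(\<integral>y. qfun MT prior obs (\<lambda>\<theta> y. phi' \<theta> (t y)) (\<lambda>\<theta> y. f' \<theta> (t y)) x y
        * marg MT prior obs y \<partial>MY)
      = (\<integral>y. (\<integral>\<theta>. post MT prior obs \<theta> y * R \<theta> (t y) \<partial>MT) * marg MT prior obs y \<partial>MY)"
    by (simp add: qfun_def rank_cdf_comp R_def)
  also have "\<dots> = enn2real (\<integral>\<^sup>+\<theta>. ennreal (prior \<theta>)
      * (\<integral>\<^sup>+y. ennreal (obs y \<theta> * R \<theta> (t y)) \<partial>MY) \<partial>MT)"
    by (rule integral_post_mult_marg_eq_joint[OF assms(1,2,4) _ R_bounds]) measurable
  also have "\<dots> = enn2real (\<integral>\<^sup>+\<theta>. ennreal (prior \<theta>)
      * (\<integral>\<^sup>+z. ennreal (obs' z \<theta> * R \<theta> z) \<partial>MY') \<partial>MT)"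
    using push_forward by (simp cong: nn_integral_cong)
  also have "\<dots> = (\<integral>z. (\<integral>\<theta>. post MT prior obs' \<theta> z * R \<theta> z \<partial>MT) * marg MT prior obs' z \<partial>MY')"
    by (rule integral_post_mult_marg_eq_joint[OF assms(1,3,6) _ R_bounds, symmetric]) measurable
  also have "\<dots> = x"
    using assms(10) \<open>x \<in> {0..1}\<close> by (simp add: passes_SBC_def qfun_def R_def)
  finally show "(\<integral>y. qfun MT prior obs (\<lambda>\<theta> y. phi' \<theta> (t y)) (\<lambda>\<theta> y. f' \<theta> (t y)) x y
      * marg MT prior obs y \<partial>MY) = x" .
qed

end
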